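(* Let $T_1=\begin{pmatrix}1&1\\0&1\end{pmatrix}$ and $T_2=\begin{pmatrix}0&1\\0&1\end{pmatrix}$. Then $h(T)=0$.
   Context: Define $\gamma^{[s_j]}_{i,n}$ ($i,j\in\{1,2\}$, $n\ge0$) by $\gamma^{[s_j]}_{i,0}=1$ and for $n\ge1$ $$\gamma^{[s_1]}_{i,n}=\sum_{j,k=1}^2T_1(i,j)T_2(i,k)\,\gamma^{[s_1]}_{j,n-1}\gamma^{[s_2]}_{k,n-1},\qquad \gamma^{[s_2]}_{i,n}=\sum_{j=1}^2T_1(i,j)\,\gamma^{[s_1]}_{j,n-1}.$$ Let $l_0=1$, $l_1=2$, $l_{k+1}=l_k+l_{k-1}$, $|E_n|=\sum_{k=0}^nl_k$ (the number of elements of word length $\le n$ in the monoid $G=\langle s_1,s_2\mid s_2s_2=s_2\rangle$), and $h(T)=\limsup_{n\to\infty}\frac{\ln(\gamma^{[s_1]}_{1,n}+\gamma^{[s_1]}_{2,n})}{|E_n|}$, the paper's entropy of the $G$-vertex shift with adjacency matrices $T=(T_1,T_2)$ over $\{1,2\}$. *)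

theory Defs
  imports "HOL-Analysis.Analysis"
begin

text \<open>Adjacency matrices are functions nat => nat => real; only the entries with
indices in {1,2} are used. gam T1 T2 n = (gamma^[s1]_{.,n}, gamma^[s2]_{.,n}).\<close>

fun gam :: "(nat \<Rightarrow> nat \<Rightarrow> real) \<Rightarrow> (nat \<Rightarrow> nat \<Rightarrow> real) \<Rightarrow> nat
            \<Rightarrow> (nat \<Rightarrow> real) \<times> (nat \<Rightarrow> real)" where
  "gam T1 T2 0 = ((\<lambda>i. 1), (\<lambda>i. 1))"
| "gam T1 T2 (Suc n) =
     (let g1 = fst (gam T1 T2 n); g2 = snd (gam T1 T2 n) in
      ((\<lambda>i. \<Sum>j\<in>{1,2}. \<Sum>k\<in>{1,2}. T1 i j * T2 i k * g1 j * g2 k),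
       (\<lambda>i. \<Sum>j\<in>{1,2}. T1 i j * g1 j)))"

definition gamma1 :: "(nat \<Rightarrow> nat \<Rightarrow> real) \<Rightarrow> (nat \<Rightarrow> nat \<Rightarrow> real) \<Rightarrow> nat \<Rightarrow> nat \<Rightarrow> real" where
  "gamma1 T1 T2 i n = fst (gam T1 T2 n) i"

fun lseq :: "nat \<Rightarrow> nat" where
  "lseq 0 = 1"
| "lseq (Suc 0) = 2"
| "lseq (Suc (Suc k)) = lseq (Suc k) + lseq k"

definition card_E :: "nat \<Rightarrow> nat" where
  "card_E n = (\<Sum>k\<le>n. lseq k)"

definition entropy :: "(nat \<Rightarrow> nat \<Rightarrow> real) \<Rightarrow> (nat \<Rightarrow> nat \<Rightarrow> real) \<Rightarrow> ereal" where
  "entropy T1 T2 = limsup (\<lambda>n. ereal (ln (gamma1 T1 T2 1 n + gamma1 T1 T2 2 n) / real (card_E n)))"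

end

theory Submission
  imports Defs "HOL-Real_Asymp.Real_Asymp"
begin

text \<open>For these matrices the state 2 only sees itself, so all gamma's at 2 stay 1, while
  the gamma's at 1 grow by one per step: gamma1 1 n = n + 1. Hence the numerator of the entropy
  quotient is ln (n + 2), whereas the denominator |E_n| is at least n + 1, so the
  quotient tends to 0.\<close>

lemma lseq_ge_1: "lseq k \<ge> 1"
  by (induction k rule: lseq.induct) auto

lemma card_E_ge: "card_E n \<ge> Suc n"
proof -
  have "(\<Sum>k\<le>n. (1::nat)) \<le> (\<Sum>k\<le>n. lseq k)"
    by (rule sum_mono) (rule lseq_ge_1)
  then show ?thesis
    unfolding card_E_def by simp
qed

lemma entropy_eq_if_tendsto:
  assumes "(\<lambda>n. ln (gamma1 T1 T2 1 n + gamma1 T1 T2 2 n) / real (card_E n)) \<longlonglongrightarrow> L"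
  shows "entropy T1 T2 = ereal L"
  unfolding entropy_def using lim_imp_Limsup[OF _ tendsto_ereal[OF assms]] by simp

lemma ln_div_card_E_tendsto_0: "(\<lambda>n. ln (real n + 2) / real (card_E n)) \<longlonglongrightarrow> 0"
proof (rule tendsto_sandwich)
  show "\<forall>\<^sub>F n in sequentially. 0 \<le> ln (real n + 2) / real (card_E n)"
    by simp
  have "ln (real n + 2) / real (card_E n) \<le> ln (real n + 2) / (real n + 1)" for n
    using card_E_ge[of n] by (intro divide_left_mono) auto
  then show "\<forall>\<^sub>F n in sequentially. ln (real n + 2) / real (card_E n) \<le> ln (real n + 2) / (real n + 1)"
    by simp
  show "(\<lambda>n. ln (real n + 2) / (real n + 1)) \<longlonglongrightarrow> 0"
    by real_asymp
qed simp

lemma gam_linear_growth: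
  assumes "T1 1 1 = 1" "T1 1 2 = 1" "T1 2 1 = 0" "T1 2 2 = 1"
      and "T2 1 1 = 0" "T2 1 2 = 1" "T2 2 1 = 0" "T2 2 2 = 1"
  shows "fst (gam T1 T2 n) 1 = real n + 1 \<and> fst (gam T1 T2 n) 2 = 1
      \<and> snd (gam T1 T2 n) 1 = real n + 1 \<and> snd (gam T1 T2 n) 2 = 1"
  using assms by (induction n) (auto simp: Let_def algebra_simps)

theorem proposition3:
  fixes T1 T2 :: "nat \<Rightarrow> nat \<Rightarrow> real"
  assumes "T1 1 1 = 1" "T1 1 2 = 1" "T1 2 1 = 0" "T1 2 2 = 1"
      and "T2 1 1 = 0" "T2 1 2 = 1" "T2 2 1 = 0" "T2 2 2 = 1"
  shows "entropy T1 T2 = 0"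
proof -
  have "gamma1 T1 T2 1 n + gamma1 T1 T2 2 n = real n + 2" for n
    using gam_linear_growth[OF assms, of n] by (simp add: gamma1_def)
  then have "(\<lambda>n. ln (gamma1 T1 T2 1 n + gamma1 T1 T2 2 n) / real (card_E n)) \<longlonglongrightarrow> 0"
    using ln_div_card_E_tendsto_0 by simp
  then show ?thesis
    by (simp add: entropy_eq_if_tendsto zero_ereal_def)
qed

end
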